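(* Let $A$ be an $n\times n$ binary matrix with zero diagonal and $\widetilde A=A+I_n$. Let $f=\mathbf{F}(j_1,\dots,j_s)$ be a proper face of $\mathcal{C}^n$ with $1\le|j_1|<\dots<|j_s|\le n$. Then the face family $\widehat f$ of $f$ in $\mathcal{F}_A$ consists of exactly $2^d$ faces, where $d=\mathrm{rank}_{\mathbb{Z}_2}\big(\widetilde A^{|j_1|\cdots|j_s|}_{|j_1|\cdots|j_s|}\big)$.
   Context: $[\pm n]=\{\pm1,\dots,\pm n\}$, $\mathcal{C}^n=\{x\in\mathbb{R}^n: -\tfrac14\le x_i\le\tfrac14\}$; $\mathbf{F}(i)$, $\mathbf{F}(-i)$ ($1\le i\le n$) are the facets in $\{x_i=\tfrac14\}$, $\{x_i=-\tfrac14\}$, and $\mathbf{F}(j_1,\dots,j_s)=\bigcap_i\mathbf{F}(j_i)$ for $j_i$ with distinct absolute values. Binary matrices have entries in $\mathbb{Z}_2$; $A^i_k$ denotes the $(i,k)$ entry viewed as $0$ or $1$. For $1\le a_1<\dots<a_s\le n$, $\widetilde A^{a_1\cdots a_s}_{a_1\cdots a_s}$ is the $s\times s$ principal submatrix of $\widetilde A$ on rows and columns $a_1,\dots,a_s$. $\mathcal{F}_A$ pairs $\mathbf{F}(j)$ with $\mathbf{F}(-j)$ via $\tau^A_j:\mathbf{F}(j)\to\mathbf{F}(-j)$, $\tau^A_j(x)=y$ with $y_{|j|}=-x_{|j|}$ and $y_k=(-1)^{A^{|j|}_k}x_k$ for $k\ne|j|$. A composition $\tau^A_{k_m}\circ\dots\circ\tau^A_{k_1}$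 applied to a proper face $f$ is valid if $f\subset\mathbf{F}(k_1)$ and $\tau^A_{k_i}\circ\dots\circ\tau^A_{k_1}(f)\subset\mathbf{F}(k_{i+1})$ for $1\le i<m$ ($m=0$ allowed). The face family $\widehat f$ is the set of faces $\tau^A_{k_m}\circ\dots\circ\tau^A_{k_1}(f)$ over all valid compositions. *)

theory Defs
  imports Main "HOL-Library.Z2" "Jordan_Normal_Form.DL_Rank_Submatrix"
begin

text \<open>Points of R^n are functions nat => real, coordinates 1..n, zero outside.
  Binary matrices are bit mat (entries in Z_2), 0-indexed: the paper's entry A^i_k is A $$ (i-1, k-1).\<close>

definition signed_idx :: "nat \<Rightarrow> int set" where
  "signed_idx n = {j. 1 \<le> \<bar>j\<bar> \<and> \<bar>j\<bar> \<le> int n}"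

definition cube :: "nat \<Rightarrow> (nat \<Rightarrow> real) set" where
  "cube n = {x. (\<forall>i\<in>{1..n}. -1/4 \<le> x i \<and> x i \<le> 1/4) \<and> (\<forall>i. i \<notin> {1..n} \<longrightarrow> x i = 0)}"

definition facet :: "nat \<Rightarrow> int \<Rightarrow> (nat \<Rightarrow> real) set" where
  "facet n j = {x \<in> cube n. x (nat \<bar>j\<bar>) = (if j > 0 then 1/4 else -1/4)}"

definition face :: "nat \<Rightarrow> int set \<Rightarrow> (nat \<Rightarrow> real) set" where
  "face n J = cube n \<inter> \<Inter> (facet n ` J)"

definition tau :: "nat \<Rightarrow> bit mat \<Rightarrow> int \<Rightarrow> (nat \<Rightarrow> real) \<Rightarrow> (nat \<Rightarrow> real)" where
  "tau n A j x = (\<lambda>k. if k = nat \<bar>j\<bar> then - x k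
      else if k \<in> {1..n} \<and> A $$ (nat \<bar>j\<bar> - 1, k - 1) = 1 then - x k else x k)"

text \<open>Applying the composition tau_{k_m} o ... o tau_{k_1} (list [k_1,...,k_m]) to a face.\<close>
fun apply_seq :: "nat \<Rightarrow> bit mat \<Rightarrow> (nat \<Rightarrow> real) set \<Rightarrow> int list \<Rightarrow> (nat \<Rightarrow> real) set" where
  "apply_seq n A f [] = f"
| "apply_seq n A f (k # ks) = apply_seq n A (tau n A k ` f) ks"

fun valid_seq :: "nat \<Rightarrow> bit mat \<Rightarrow> (nat \<Rightarrow> real) set \<Rightarrow> int list \<Rightarrow> bool" where
  "valid_seq n A f [] = True"
| "valid_seq n A f (k # ks) = (k \<in> signed_idx n \<and> f \<subseteq> facet n k \<and> valid_seq n A (tau n A k ` f) ks)"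

definition face_family :: "nat \<Rightarrow> bit mat \<Rightarrow> (nat \<Rightarrow> real) set \<Rightarrow> (nat \<Rightarrow> real) set set" where
  "face_family n A f = {apply_seq n A f ks | ks. valid_seq n A f ks}"

end

theory Submission
  imports Defs "Jordan_Normal_Form.Matrix_Kernel"
begin

(* A face of the cube fixing the coordinates p_1 < ... < p_s (the absolute values of J) is
   described by a sign vector v in Z_2^s.  The map tau_k for a fixed coordinate k = p_c negates
   coordinate k and every coordinate i with A(k,i) = 1; on the fixed coordinates this adds row c
   of M = (A + I) restricted to rows and columns p_1..p_s.  A facet can only contain the face if it
   belongs to a fixed coordinate, so the face family of the face with sign vector v consists of
   the faces with sign vectors v + y, y ranging over the row space of M, i.e. the column space
   of M^T.  Hence its size is |range M^T| = |range M| = 2^rank M. *)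

lemma bit_cases: "(b::bit) = 0 \<or> b = 1"
  by (cases b) auto

lemma card_UNIV_bit: "card (UNIV :: bit set) = 2"
proof -
  have UNIV_bit: "(UNIV :: bit set) = {0, 1}" using bit_cases by auto
  show ?thesis unfolding UNIV_bit by (simp add: card_insert_if)
qed

lemma bit_add_self [simp]: "(b::bit) + b = 0"
  using bit_cases[of b] by auto

lemma card_carrier_vec:
  assumes "finite (UNIV :: 'a set)"
  shows "card (carrier_vec m :: 'a vec set) = card (UNIV :: 'a set) ^ m"
proof -
  let ?L = "{xs. set xs \<subseteq> (UNIV :: 'a set) \<and> length xs = m}"
  have "list_of_vec ` (carrier_vec m :: 'a vec set) = ?L"
  proof (intro equalityI subsetI)
    fix xs :: "'a list" assume "xs \<in> ?L"
    then have "vec_of_list xs \<in> carrier_vec m" by (intro carrier_vecI) simp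
    moreover have "xs = list_of_vec (vec_of_list xs)" by (simp add: list_vec)
    ultimately show "xs \<in> list_of_vec ` carrier_vec m" by (rule rev_image_eqI)
  next
    fix xs :: "'a list" assume "xs \<in> list_of_vec ` carrier_vec m"
    then obtain v :: "'a vec" where "v \<in> carrier_vec m" "xs = list_of_vec v" by blast
    then have "length xs = m" by simp
    then show "xs \<in> ?L" by simp
  qed
  moreover have "inj_on list_of_vec (carrier_vec m :: 'a vec set)"
    by (rule inj_onI) (metis vec_list)
  ultimately have "bij_betw list_of_vec (carrier_vec m :: 'a vec set) ?L"
    unfolding bij_betw_def by blast
  then have "card (carrier_vec m :: 'a vec set) = card ?L" by (rule bij_betw_same_card)
  also have "\<dots> = card (UNIV :: 'a set) ^ m" by (rule card_lists_length_eq[OF assms])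
  finally show ?thesis .
qed

lemma card_carrier_vec_bit: "card (carrier_vec m :: bit vec set) = 2 ^ m"
proof -
  have "finite (UNIV :: bit set)" using card_UNIV_bit by (intro card_ge_0_finite) simp
  then have "card (carrier_vec m :: bit vec set) = card (UNIV :: bit set) ^ m"
    by (rule card_carrier_vec)
  then show ?thesis unfolding card_UNIV_bit .
qed

lemma finite_carrier_vec_bit [simp]: "finite (carrier_vec m :: bit vec set)"
  by (rule card_ge_0_finite) (simp add: card_carrier_vec_bit)

lemma vec_add_self_bit: "(v :: bit vec) \<in> carrier_vec m \<Longrightarrow> v + v = 0\<^sub>v m"
  by (intro eq_vecI) auto

lemma vec_add_cancel_bit:
  "(v :: bit vec) \<in> carrier_vec m \<Longrightarrow> w \<in> carrier_vec m \<Longrightarrow> v + (v + w) = w"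
  by (intro eq_vecI) (auto simp flip: add.assoc)

definition chi :: "bit \<Rightarrow> int" where
  "chi b = (if b = 0 then 1 else -1)"

lemma chi_add: "chi (a + b) = chi a * chi b"
  using bit_cases[of a] bit_cases[of b] by (auto simp: chi_def)

lemma sum_chi_scalar_prod:
  assumes v: "(v :: bit vec) \<in> carrier_vec m"
  shows "(\<Sum>x\<in>carrier_vec m. chi (x \<bullet> v)) = (if v = 0\<^sub>v m then 2 ^ m else 0)"
proof (cases "v = 0\<^sub>v m")
  case True
  then show ?thesis by (simp add: chi_def card_carrier_vec_bit)
next
  case False
  then obtain i where i: "i < m" "v $ i = 1"
    using v by (metis bit_not_zero_iff carrier_vecD eq_vecI index_zero_vec)
  let ?e = "unit_vec m i :: bit vec"
  let ?C = "carrier_vec m :: bit vec set"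
  have "bij_betw (\<lambda>x. x + ?e) ?C ?C"
    by (rule bij_betwI[where g = "\<lambda>x. x + ?e"])
      (auto simp: add.assoc[symmetric] vec_add_self_bit comm_add_vec[of _ m ?e]
        intro: vec_add_cancel_bit)
  then have "(\<Sum>x\<in>?C. chi (x \<bullet> v)) = (\<Sum>x\<in>?C. chi ((x + ?e) \<bullet> v))"
    using sum.reindex_bij_betw[of "\<lambda>x. x + ?e" ?C ?C "\<lambda>x. chi (x \<bullet> v)"] by simp
  also have "\<dots> = (\<Sum>x\<in>?C. - chi (x \<bullet> v))"
  proof (rule sum.cong[OF refl])
    fix x assume x: "x \<in> ?C"
    have "(x + ?e) \<bullet> v = x \<bullet> v + 1"
      using x v i by (simp add: add_scalar_prod_distrib)
    then show "chi ((x + ?e) \<bullet> v) = - chi (x \<bullet> v)" by (simp add: chi_add chi_def)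
  qed
  also have "\<dots> = - (\<Sum>x\<in>?C. chi (x \<bullet> v))" by (simp add: sum_negf)
  finally show ?thesis using False by simp
qed

definition mat_range :: "'a :: semiring_0 mat \<Rightarrow> 'a vec set" where
  "mat_range M = (\<lambda>x. M *\<^sub>v x) ` carrier_vec (dim_col M)"

lemma sum_if_card:
  "finite S \<Longrightarrow> (\<Sum>x\<in>S. if P x then (c::int) else 0) = c * int (card {x\<in>S. P x})"
  by (simp add: sum.If_cases Int_def)

text \<open>Counting the pairs (x, y) with chi (x \<bullet> M y) in two ways relates the kernel
  of M to the kernel of its transpose.\<close>

lemma card_mat_kernel_transpose:
  assumes M: "(M :: bit mat) \<in> carrier_mat nr nc"
  shows "2 ^ nr * card (mat_kernel M) = 2 ^ nc * card (mat_kernel (transpose_mat M))"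
proof -
  let ?R = "carrier_vec nr :: bit vec set" and ?C = "carrier_vec nc :: bit vec set"
  let ?S = "\<Sum>y\<in>?C. \<Sum>x\<in>?R. chi (x \<bullet> (M *\<^sub>v y))"
  have "?S = (\<Sum>y\<in>?C. if M *\<^sub>v y = 0\<^sub>v nr then 2 ^ nr else 0)"
    using M by (intro sum.cong refl sum_chi_scalar_prod) auto
  also have "\<dots> = 2 ^ nr * int (card (mat_kernel M))"
    using M by (simp add: sum_if_card mat_kernel_def)
  finally have S_kernel: "?S = 2 ^ nr * int (card (mat_kernel M))" .
  have "?S = (\<Sum>x\<in>?R. \<Sum>y\<in>?C. chi (y \<bullet> (transpose_mat M *\<^sub>v x)))"
  proof (subst sum.swap, intro sum.cong refl)
    fix x y assume x: "x \<in> ?R" and y: "y \<in> ?C"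
    have "x \<bullet> (M *\<^sub>v y) = (transpose_mat M *\<^sub>v x) \<bullet> y"
      using transpose_vec_mult_scalar[OF M y x] by simp
    also have "\<dots> = y \<bullet> (transpose_mat M *\<^sub>v x)"
      using M x y by (intro comm_scalar_prod[of _ nc]) auto
    finally show "chi (x \<bullet> (M *\<^sub>v y)) = chi (y \<bullet> (transpose_mat M *\<^sub>v x))" by simp
  qed
  also have "\<dots> = (\<Sum>x\<in>?R. if transpose_mat M *\<^sub>v x = 0\<^sub>v nc then 2 ^ nc else 0)"
    using M by (intro sum.cong refl sum_chi_scalar_prod) auto
  also have "\<dots> = 2 ^ nc * int (card (mat_kernel (transpose_mat M)))"
    using M by (simp add: sum_if_card mat_kernel_def)
  finally have "int (2 ^ nr * card (mat_kernel M)) = int (2 ^ nc * card (mat_kernel (transpose_mat M)))"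
    using S_kernel by simp
  then show ?thesis by (simp only: of_nat_eq_iff)
qed

text \<open>Rank-nullity in counting form: the fibres of x \<mapsto> M x are cosets of the kernel.\<close>

lemma card_range_times_kernel:
  assumes M: "(M :: bit mat) \<in> carrier_mat nr nc"
  shows "card (mat_range M) * card (mat_kernel M) = 2 ^ nc"
proof -
  let ?C = "carrier_vec nc :: bit vec set"
  let ?f = "\<lambda>x. M *\<^sub>v x"
  have fibre: "card {x \<in> ?C. ?f x = w} = card (mat_kernel M)" if w: "w \<in> mat_range M" for w
  proof -
    obtain x0 where x0: "x0 \<in> ?C" "w = ?f x0" using w M unfolding mat_range_def by auto
    have "{x \<in> ?C. ?f x = w} = (\<lambda>k. x0 + k) ` mat_kernel M"
    proof (intro equalityI subsetI)
      fix x assume "x \<in> {x \<in> ?C. ?f x = w}"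
      then have x: "x \<in> ?C" "?f x = ?f x0" using x0 by auto
      then have "?f (x0 + x) = 0\<^sub>v nr"
        using M x0 by (simp add: mult_add_distrib_mat_vec vec_add_self_bit)
      then have "x0 + x \<in> mat_kernel M" using M x0 x by (intro mat_kernelI) auto
      moreover have "x = x0 + (x0 + x)" using x0 x by (simp add: vec_add_cancel_bit)
      ultimately show "x \<in> (\<lambda>k. x0 + k) ` mat_kernel M" by (rule rev_image_eqI)
    next
      fix x assume "x \<in> (\<lambda>k. x0 + k) ` mat_kernel M"
      then obtain k where k: "k \<in> ?C" "?f k = 0\<^sub>v nr" "x = x0 + k"
        using M mat_kernelD by blast
      then show "x \<in> {x \<in> ?C. ?f x = w}"
        using M x0 by (simp add: mult_add_distrib_mat_vec)
    qed
    moreover have "inj_on (\<lambda>k. x0 + k) (mat_kernel M)"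
      using x0 M by (intro inj_onI) (metis mat_kernelD(1) vec_add_cancel_bit)
    ultimately show ?thesis by (simp add: card_image)
  qed
  have "2 ^ nc = card ?C" by (simp add: card_carrier_vec_bit)
  also have "\<dots> = (\<Sum>x\<in>?C. 1)" by simp
  also have "\<dots> = (\<Sum>w\<in>?f ` ?C. \<Sum>x\<in>{x \<in> ?C. ?f x = w}. 1)"
    by (rule sum.image_gen) simp
  also have "\<dots> = card (mat_range M) * card (mat_kernel M)"
    using M fibre by (simp add: mat_range_def)
  finally show ?thesis by simp
qed

lemma card_range_transpose:
  assumes M: "(M :: bit mat) \<in> carrier_mat nr nc"
  shows "card (mat_range (transpose_mat M)) = card (mat_range M)"
proof -
  have MT: "transpose_mat M \<in> carrier_mat nc nr" using M by simp
  have "0\<^sub>v nc \<in> mat_kernel M" using M by (intro mat_kernelI) auto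
  moreover have "mat_kernel M \<subseteq> carrier_vec nc" using M by (auto simp: mat_kernel_def)
  then have "finite (mat_kernel M)" by (rule finite_subset) simp
  ultimately have kernel_pos: "card (mat_kernel M) > 0" by (auto simp: card_gt_0_iff)
  let ?K = "2 ^ nr * card (mat_kernel M)"
  have "?K * card (mat_range M) = 2 ^ nr * 2 ^ nc"
    using card_range_times_kernel[OF M] by (simp add: ac_simps)
  also have "\<dots> = ?K * card (mat_range (transpose_mat M))"
    using card_range_times_kernel[OF MT] card_mat_kernel_transpose[OF M] by (simp add: ac_simps)
  finally show ?thesis using kernel_pos by simp
qed

lemma (in vectorspace) card_carrier_from_basis:
  assumes fB: "finite B" and bB: "basis B"
  shows "card (carrier V) = card (carrier K) ^ card B"
proof -
  from bB have li: "lin_indpt B" and gen: "span B = carrier V" and BC: "B \<subseteq> carrier V"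
    by (auto simp: basis_def)
  let ?F = "B \<rightarrow>\<^sub>E carrier K"
  have inj: "inj_on (\<lambda>a. lincomb a B) ?F"
  proof (rule inj_onI)
    fix a b assume a: "a \<in> ?F" and b: "b \<in> ?F" and eq: "lincomb a B = lincomb b B"
    have aF: "a \<in> B \<rightarrow> carrier K" and bF: "b \<in> B \<rightarrow> carrier K" using a b by auto
    have "lincomb (\<lambda>v. a v \<ominus>\<^bsub>K\<^esub> b v) B = lincomb a B \<ominus>\<^bsub>V\<^esub> lincomb b B"
      by (rule lincomb_diff[OF fB BC aF bF])
    also have "\<dots> = \<zero>\<^bsub>V\<^esub>" using eq lincomb_closed[OF BC bF] by (simp add: M.minus_eq M.r_neg)
    finally have z: "lincomb (\<lambda>v. a v \<ominus>\<^bsub>K\<^esub> b v) B = \<zero>\<^bsub>V\<^esub>" .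
    have cF: "(\<lambda>v. a v \<ominus>\<^bsub>K\<^esub> b v) \<in> B \<rightarrow> carrier K" using aF bF by auto
    have "a v = b v" if v: "v \<in> B" for v
    proof -
      have "a v \<ominus>\<^bsub>K\<^esub> b v = \<zero>\<^bsub>K\<^esub>"
      proof (rule ccontr)
        assume "a v \<ominus>\<^bsub>K\<^esub> b v \<noteq> \<zero>\<^bsub>K\<^esub>"
        then have "lin_dep B" by (intro lin_dep_crit[OF fB subset_refl cF v _ z])
        with li show False by simp
      qed
      moreover have "a v \<in> carrier K" "b v \<in> carrier K" using aF bF v by auto
      ultimately show ?thesis
        by (metis R.add.inv_closed R.minus_eq R.add.inv_equality R.minus_minus)
    qed
    then show "a = b" using a b by (intro PiE_ext) auto
  qed
  have "(\<lambda>a. lincomb a B) ` ?F = carrier V"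
  proof (intro equalityI subsetI)
    fix v assume "v \<in> (\<lambda>a. lincomb a B) ` ?F"
    then show "v \<in> carrier V" using lincomb_closed[OF BC] by auto
  next
    fix v assume "v \<in> carrier V"
    then have "v \<in> span B" using gen by simp
    then obtain a where a: "a \<in> B \<rightarrow> carrier K" "v = lincomb a B"
      using finite_span[OF fB BC] by blast
    have "lincomb (restrict a B) B = lincomb a B"
      by (rule lincomb_cong[OF refl BC]) (use a in auto)
    moreover have "restrict a B \<in> ?F" using a by auto
    ultimately show "v \<in> (\<lambda>a. lincomb a B) ` ?F" using a by (metis image_eqI)
  qed
  then have "card (carrier V) = card ?F" using card_image[OF inj] by simp
  also have "\<dots> = card (carrier K) ^ card B" by (simp add: card_PiE fB)
  finally show ?thesis .
qed

lemma card_mat_range_rank: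
  assumes M: "(M :: 'a :: field mat) \<in> carrier_mat nr nc"
  shows "card (mat_range M) = card (UNIV :: 'a set) ^ vec_space.rank nr M"
proof -
  interpret vs: vec_space "TYPE('a)" nr .
  let ?W = "vs.span (set (cols M))"
  have "set (cols M) \<subseteq> carrier_vec nr" using M cols_dim by blast
  then have W: "vectorspace class_ring (vs.vs ?W)"
    using vs.span_is_subspace vs.subspace_is_vs by simp
  obtain B where B: "finite B" "vectorspace.basis class_ring (vs.vs ?W) B"
    using vectorspace.finite_basis_exists[OF W vs.fin_dim_span_cols[OF M]] by blast
  have "card ?W = card (UNIV :: 'a set) ^ card B"
    using vectorspace.card_carrier_from_basis[OF W B] by simp
  also have "card B = vs.rank M"
    unfolding vs.rank_def using vectorspace.dim_basis[OF W B] by simp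
  also have "?W = mat_range M"
    using vs.col_space_eq[OF M] M unfolding vs.col_space_def mat_range_def by auto
  finally show ?thesis .
qed

lemma transpose_range_add_row:
  assumes M: "(M :: 'a :: comm_ring_1 mat) \<in> carrier_mat r m" and c: "c < r"
    and y: "y \<in> mat_range (transpose_mat M)"
  shows "y + row M c \<in> mat_range (transpose_mat M)"
proof -
  obtain x where x: "x \<in> carrier_vec r" "y = transpose_mat M *\<^sub>v x"
    using y M unfolding mat_range_def by auto
  have "transpose_mat M *\<^sub>v unit_vec r c = row M c"
    using M c by (intro eq_vecI) auto
  then have "y + row M c = transpose_mat M *\<^sub>v (x + unit_vec r c)"
    using M x by (simp add: mult_add_distrib_mat_vec)
  then show ?thesis using M x unfolding mat_range_def by auto
qed

lemma transpose_range_induct: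
  assumes M: "(M :: bit mat) \<in> carrier_mat r m" and v: "v \<in> carrier_vec m" and "P v"
    and step: "\<And>w c. w \<in> carrier_vec m \<Longrightarrow> c < r \<Longrightarrow> P w \<Longrightarrow> P (w + row M c)"
    and y: "y \<in> mat_range (transpose_mat M)"
  shows "P (v + y)"
proof -
  obtain x where x: "x \<in> carrier_vec r" "y = transpose_mat M *\<^sub>v x"
    using y M unfolding mat_range_def by auto
  define x_upto where "x_upto k = vec r (\<lambda>a. if a < k then x $ a else 0)" for k
  have "P (v + transpose_mat M *\<^sub>v x_upto k)" if "k \<le> r" for k
    using that
  proof (induction k)
    case 0
    have "x_upto 0 = 0\<^sub>v r" unfolding x_upto_def by auto
    moreover have "transpose_mat M *\<^sub>v 0\<^sub>v r = 0\<^sub>v m" using M by (intro eq_vecI) auto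
    ultimately show ?case using v \<open>P v\<close> by simp
  next
    case (Suc k)
    let ?w = "v + transpose_mat M *\<^sub>v x_upto k"
    have w: "?w \<in> carrier_vec m" using M v by (simp add: x_upto_def)
    consider "x $ k = 0" | "x $ k = 1" using bit_cases by blast
    then show ?case
    proof cases
      case 1
      then have "x_upto (Suc k) = x_upto k"
        unfolding x_upto_def by (intro eq_vecI) (auto simp: less_Suc_eq)
      then show ?thesis using Suc by simp
    next
      case 2
      then have "x_upto (Suc k) = x_upto k + unit_vec r k"
        unfolding x_upto_def by (intro eq_vecI) (auto simp: less_Suc_eq unit_vec_def)
      moreover have "transpose_mat M *\<^sub>v unit_vec r k = row M k"
        using M Suc.prems by (intro eq_vecI) auto
      ultimately have "v + transpose_mat M *\<^sub>v x_upto (Suc k)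
          = v + (transpose_mat M *\<^sub>v x_upto k + row M k)"
        using M by (simp add: x_upto_def mult_add_distrib_mat_vec)
      also have "\<dots> = ?w + row M k"
        using M v Suc.prems by (intro assoc_add_vec[symmetric]) (auto simp: x_upto_def)
      finally have "v + transpose_mat M *\<^sub>v x_upto (Suc k) = ?w + row M k" .
      moreover have "P (?w + row M k)" using step[OF w] Suc by simp
      ultimately show ?thesis by simp
    qed
  qed
  moreover have "x_upto r = x" unfolding x_upto_def using x by (intro eq_vecI) auto
  ultimately show ?thesis using x by auto
qed

definition sign_val :: "bit \<Rightarrow> real" where
  "sign_val b = (if b = 0 then 1/4 else -1/4)"

lemma sign_val_inj: "sign_val a = sign_val b \<Longrightarrow> a = b"
  using bit_cases[of a] bit_cases[of b] by (auto simp: sign_val_def)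

definition signed_face :: "nat \<Rightarrow> (nat \<Rightarrow> nat) \<Rightarrow> nat \<Rightarrow> bit vec \<Rightarrow> (nat \<Rightarrow> real) set" where
  "signed_face n p m v = {x \<in> cube n. \<forall>a<m. x (p a) = sign_val (v $ a)}"

lemma tau_involution: "tau n A k (tau n A k x) = x"
  unfolding tau_def by (rule ext) auto

lemma tau_cube:
  assumes "x \<in> cube n" "k \<in> signed_idx n"
  shows "tau n A k x \<in> cube n"
  using assms unfolding cube_def tau_def signed_idx_def by auto

lemma apply_seq_append: "apply_seq n A f (xs @ ys) = apply_seq n A (apply_seq n A f xs) ys"
  by (induction xs arbitrary: f) auto

lemma valid_seq_append:
  "valid_seq n A f (xs @ ys) \<longleftrightarrow> valid_seq n A f xs \<and> valid_seq n A (apply_seq n A f xs) ys"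
  by (induction xs arbitrary: f) auto

locale face_pairing =
  fixes n :: nat and A :: "bit mat" and J :: "int set"
  assumes A: "A \<in> carrier_mat n n" and diag: "\<forall>i<n. A $$ (i, i) = 0"
    and J: "J \<subseteq> signed_idx n" and inj_abs: "inj_on abs J"
begin

text \<open>The fixed coordinates (0-based) of F(J), their number m, the a-th fixed coordinate
  (1-based, increasing), and the principal submatrix of A + I on them.\<close>

definition supp :: "nat set" where
  "supp = (\<lambda>j. nat \<bar>j\<bar> - 1) ` J"

definition m :: nat where
  "m = card J"

definition coord :: "nat \<Rightarrow> nat" where
  "coord a = pick supp a + 1"

definition M :: "bit mat" where
  "M = submatrix (A + 1\<^sub>m n) supp supp"

abbreviation F :: "bit vec \<Rightarrow> (nat \<Rightarrow> real) set" where
  "F v \<equiv> signed_face n coord m v"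

lemma J_abs: "j \<in> J \<Longrightarrow> 1 \<le> \<bar>j\<bar> \<and> \<bar>j\<bar> \<le> int n"
  using J by (auto simp: signed_idx_def)

lemma finite_J: "finite J"
proof (rule finite_subset)
  show "J \<subseteq> {- int n .. int n}" using J_abs by fastforce
qed simp

lemma card_supp: "card supp = m"
proof -
  have "inj_on (\<lambda>j. nat \<bar>j\<bar> - 1) J"
  proof (rule inj_onI)
    fix j j' assume j: "j \<in> J" "j' \<in> J" and eq: "(nat \<bar>j\<bar> - 1) = (nat \<bar>j'\<bar> - 1)"
    have "\<bar>j\<bar> = \<bar>j'\<bar>" using eq J_abs[OF j(1)] J_abs[OF j(2)] by linarith
    then show "j = j'" using inj_abs j unfolding inj_on_def by blast
  qed
  then show ?thesis unfolding supp_def m_def by (rule card_image)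
qed

lemma supp_less: "supp \<subseteq> {..<n}"
  using J_abs by (force simp: supp_def)

lemma coord_in_supp: "a < m \<Longrightarrow> coord a - 1 \<in> supp"
  using card_supp by (auto simp: coord_def intro: pick_in_set)

lemma coord_range: "a < m \<Longrightarrow> 1 \<le> coord a \<and> coord a \<le> n"
  using coord_in_supp supp_less by (force simp: coord_def)

lemma coord_strict_mono: "a < b \<Longrightarrow> b < m \<Longrightarrow> coord a < coord b"
  using card_supp by (auto simp: coord_def intro: pick_mono)

lemma coord_inj: "a < m \<Longrightarrow> b < m \<Longrightarrow> coord a = coord b \<Longrightarrow> a = b"
  using coord_strict_mono[of a b] coord_strict_mono[of b a] by (cases a b rule: linorder_cases) auto

lemma J_coord: "j \<in> J \<Longrightarrow> \<exists>a<m. coord a = nat \<bar>j\<bar>"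
proof -
  assume j: "j \<in> J"
  then have i: "nat \<bar>j\<bar> - 1 \<in> supp" unfolding supp_def by blast
  have "{i' \<in> supp. i' < nat \<bar>j\<bar> - 1} \<subset> supp" using i by auto
  then have "card {i' \<in> supp. i' < nat \<bar>j\<bar> - 1} < m"
    using card_supp finite_J psubset_card_mono[of supp] by (simp add: supp_def)
  moreover have "coord (card {i' \<in> supp. i' < nat \<bar>j\<bar> - 1}) = nat \<bar>j\<bar>"
    using pick_card_in_set[OF i] J_abs[OF j] unfolding coord_def by linarith
  ultimately show ?thesis by blast
qed

lemma coord_J: "a < m \<Longrightarrow> \<exists>j\<in>J. nat \<bar>j\<bar> = coord a"
proof -
  assume "a < m"
  then obtain j where j: "j \<in> J" "coord a - 1 = nat \<bar>j\<bar> - 1"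
    using coord_in_supp unfolding supp_def by blast
  then show ?thesis using J_abs[OF j(1)] coord_range[OF \<open>a < m\<close>] by (intro bexI[OF _ j(1)]) linarith
qed

lemma supp_in_dims:
  "{i. i < dim_row (A + 1\<^sub>m n) \<and> i \<in> supp} = supp"
  "{i. i < dim_col (A + 1\<^sub>m n) \<and> i \<in> supp} = supp"
  using supp_less A by auto

lemma M_carrier: "M \<in> carrier_mat m m"
  unfolding M_def carrier_mat_def
  using dim_submatrix[of "A + 1\<^sub>m n" supp supp] supp_in_dims card_supp by simp

lemma M_entry:
  assumes c: "c < m" and a: "a < m"
  shows "M $$ (c, a) = (if c = a then 1 else A $$ (coord c - 1, coord a - 1))"
proof -
  have pick: "coord c - 1 = pick supp c" "coord a - 1 = pick supp a"
    by (simp_all add: coord_def)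
  have lt: "pick supp c < n" "pick supp a < n"
    using coord_range[OF c] coord_range[OF a] pick by auto
  have "M $$ (c, a) = (A + 1\<^sub>m n) $$ (pick supp c, pick supp a)"
    unfolding M_def by (rule submatrix_index) (use c a supp_in_dims card_supp in auto)
  also have "\<dots> = A $$ (pick supp c, pick supp a) + 1\<^sub>m n $$ (pick supp c, pick supp a)"
    using A lt by simp
  also have "1\<^sub>m n $$ (pick supp c, pick supp a) = (if c = a then 1 else 0)"
    using lt coord_inj[OF c a] by (auto simp: coord_def)
  finally show ?thesis using diag lt(1) pick by auto
qed

definition centre :: "bit vec \<Rightarrow> nat \<Rightarrow> real" where
  "centre v i = (if i \<in> coord ` {..<m} then sign_val (v $ inv_into {..<m} coord i) else 0)"

lemma inj_on_coord: "inj_on coord {..<m}"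
  using coord_inj by (auto intro: inj_onI)

lemma centre_coord: "a < m \<Longrightarrow> centre v (coord a) = sign_val (v $ a)"
  using inj_on_coord by (simp add: centre_def)

lemma centre_in_F: "centre v \<in> F v"
proof -
  have "centre v \<in> cube n"
    using coord_range by (auto simp: cube_def centre_def sign_val_def)
  then show ?thesis using centre_coord by (simp add: signed_face_def)
qed

lemma F_inj: "inj_on F (carrier_vec m)"
proof (rule inj_onI)
  fix v w assume v: "v \<in> carrier_vec m" and w: "w \<in> carrier_vec m" and eq: "F v = F w"
  show "v = w"
  proof (rule eq_vecI)
    fix a assume "a < dim_vec w"
    then have a: "a < m" using w by simp
    have "centre v \<in> F w" using centre_in_F[of v] eq by simp
    then have "centre v (coord a) = sign_val (w $ a)" using a by (simp add: signed_face_def)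
    then show "v $ a = w $ a" using centre_coord[OF a] by (auto intro: sign_val_inj)
  qed (use v w in simp)
qed

lemma facet_containing_F:
  assumes "F v \<subseteq> facet n k"
  shows "\<exists>c<m. nat \<bar>k\<bar> = coord c"
proof -
  have "centre v \<in> facet n k" using centre_in_F assms by blast
  then have "centre v (nat \<bar>k\<bar>) \<noteq> 0" by (auto simp: facet_def)
  then show ?thesis unfolding centre_def by (auto split: if_splits)
qed

lemma facet_of_coord:
  fixes v :: "bit vec"
  assumes c: "c < m"
  defines "k \<equiv> if v $ c = 0 then int (coord c) else - int (coord c)"
  shows "k \<in> signed_idx n" "nat \<bar>k\<bar> = coord c" "F v \<subseteq> facet n k"
proof -
  show "k \<in> signed_idx n" "nat \<bar>k\<bar> = coord c"
    using coord_range[OF c] by (auto simp: k_def signed_idx_def)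
  show "F v \<subseteq> facet n k"
    using c coord_range[OF c] by (auto simp: signed_face_def facet_def k_def sign_val_def)
qed

text \<open>The key computation: tau for the fixed coordinate coord c negates coordinate coord c and
  the fixed coordinates coord a with A(coord c, coord a) = 1, i.e. it adds row c of M to the sign
  vector; as tau is an involution it maps F v onto F (v + row M c).\<close>

lemma tau_maps_F:
  assumes k: "k \<in> signed_idx n" and kc: "nat \<bar>k\<bar> = coord c" and c: "c < m"
    and v: "v \<in> carrier_vec m" and x: "x \<in> F v"
  shows "tau n A k x \<in> F (v + row M c)"
proof -
  have xv: "x (coord a) = sign_val (v $ a)" if "a < m" for a
    using x that by (simp add: signed_face_def)
  have "tau n A k x (coord a) = sign_val ((v + row M c) $ a)" if a: "a < m" for a
  proof -
    have entry: "(v + row M c) $ a = v $ a + M $$ (c, a)" using v a c M_carrier by simp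
    show ?thesis
    proof (cases "a = c")
      case True
      then have "tau n A k x (coord a) = - x (coord a)" using kc by (simp add: tau_def)
      then show ?thesis
        using True entry M_entry[OF c c] xv[OF a] by (simp add: sign_val_def)
    next
      case False
      then have "coord a \<noteq> nat \<bar>k\<bar>" using kc coord_inj[OF a c] by auto
      then have tau_a: "tau n A k x (coord a)
          = (if A $$ (coord c - 1, coord a - 1) = 1 then - x (coord a) else x (coord a))"
        using coord_range[OF a] kc by (simp add: tau_def)
      consider "A $$ (coord c - 1, coord a - 1) = 0" | "A $$ (coord c - 1, coord a - 1) = 1"
        using bit_cases by blast
      then show ?thesis
        using tau_a entry M_entry[OF c a] False xv[OF a] by cases (simp_all add: sign_val_def)
    qed
  qed
  moreover have "tau n A k x \<in> cube n" using x k by (intro tau_cube) (simp_all add: signed_face_def)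
  ultimately show ?thesis by (simp add: signed_face_def)
qed

lemma tau_image_F:
  assumes k: "k \<in> signed_idx n" and kc: "nat \<bar>k\<bar> = coord c" and c: "c < m"
    and v: "v \<in> carrier_vec m"
  shows "tau n A k ` F v = F (v + row M c)"
proof (intro equalityI subsetI)
  fix y assume "y \<in> tau n A k ` F v"
  then show "y \<in> F (v + row M c)" using tau_maps_F[OF k kc c v] by blast
next
  fix y assume y: "y \<in> F (v + row M c)"
  have row: "row M c \<in> carrier_vec m" using M_carrier c by simp
  have "v + row M c + row M c = v"
    using v row M_carrier by (intro eq_vecI) (auto simp: add.assoc[where 'a = bit])
  then have "tau n A k y \<in> F v"
    using tau_maps_F[OF k kc c _ y] v row by simp
  then show "y \<in> tau n A k ` F v" by (rule rev_image_eqI) (simp add: tau_involution)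
qed

lemma reachable_faces:
  assumes "valid_seq n A (F v) ks" and "v \<in> carrier_vec m"
  shows "\<exists>y\<in>mat_range (transpose_mat M). apply_seq n A (F v) ks = F (v + y)"
  using assms
proof (induction ks arbitrary: v)
  case Nil
  have "transpose_mat M *\<^sub>v 0\<^sub>v m = 0\<^sub>v m" using M_carrier by (intro eq_vecI) auto
  then have "0\<^sub>v m \<in> mat_range (transpose_mat M)"
    using M_carrier unfolding mat_range_def
    by (metis carrier_matD(1) index_transpose_mat(3) rev_image_eqI zero_carrier_vec)
  then show ?case using Nil.prems by (intro bexI[of _ "0\<^sub>v m"]) auto
next
  case (Cons k ks)
  then have k: "k \<in> signed_idx n" "F v \<subseteq> facet n k"
    and rest: "valid_seq n A (tau n A k ` F v) ks" by auto
  obtain c where c: "c < m" "nat \<bar>k\<bar> = coord c" using facet_containing_F[OF k(2)] by blast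
  have image: "tau n A k ` F v = F (v + row M c)" by (rule tau_image_F[OF k(1) c(2) c(1) Cons.prems(2)])
  have row: "row M c \<in> carrier_vec m" using M_carrier c(1) by simp
  obtain y where y: "y \<in> mat_range (transpose_mat M)"
    "apply_seq n A (F (v + row M c)) ks = F (v + row M c + y)"
    using Cons.IH[of "v + row M c"] rest image row Cons.prems(2) by auto
  have y_carrier: "y \<in> carrier_vec m" using y(1) M_carrier by (auto simp: mat_range_def)
  have "v + row M c + y = v + (y + row M c)"
    using Cons.prems(2) row y_carrier by (simp add: assoc_add_vec comm_add_vec[of y m])
  moreover have "y + row M c \<in> mat_range (transpose_mat M)"
    by (rule transpose_range_add_row[OF M_carrier c(1) y(1)])
  ultimately show ?case using y(2) image by auto
qed

lemma faces_reachable: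
  assumes v: "v \<in> carrier_vec m" and y: "y \<in> mat_range (transpose_mat M)"
  shows "\<exists>ks. valid_seq n A (F v) ks \<and> apply_seq n A (F v) ks = F (v + y)"
  using M_carrier v _ _ y
proof (rule transpose_range_induct)
  show "\<exists>ks. valid_seq n A (F v) ks \<and> apply_seq n A (F v) ks = F v"
    by (intro exI[of _ "[]"]) simp
next
  fix w c assume w: "w \<in> carrier_vec m" and c: "c < m"
    and "\<exists>ks. valid_seq n A (F v) ks \<and> apply_seq n A (F v) ks = F w"
  then obtain ks where ks: "valid_seq n A (F v) ks" "apply_seq n A (F v) ks = F w" by blast
  define k where "k = (if w $ c = 0 then int (coord c) else - int (coord c))"
  have k: "k \<in> signed_idx n" "nat \<bar>k\<bar> = coord c" "F w \<subseteq> facet n k"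
    using facet_of_coord[OF c, of w] unfolding k_def by auto
  have "valid_seq n A (F v) (ks @ [k])" using ks k by (simp add: valid_seq_append)
  moreover have "apply_seq n A (F v) (ks @ [k]) = F (w + row M c)"
    using ks tau_image_F[OF k(1) k(2) c w] by (simp add: apply_seq_append)
  ultimately show "\<exists>ks. valid_seq n A (F v) ks \<and> apply_seq n A (F v) ks = F (w + row M c)" by blast
qed

lemma face_family_F:
  assumes v: "v \<in> carrier_vec m"
  shows "face_family n A (F v) = F ` (\<lambda>y. v + y) ` mat_range (transpose_mat M)"
proof (intro equalityI subsetI)
  fix G assume "G \<in> face_family n A (F v)"
  then obtain ks where "valid_seq n A (F v) ks" "G = apply_seq n A (F v) ks"
    unfolding face_family_def by blast
  then show "G \<in> F ` (\<lambda>y. v + y) ` mat_range (transpose_mat M)"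
    using reachable_faces[OF _ v] by blast
next
  fix G assume "G \<in> F ` (\<lambda>y. v + y) ` mat_range (transpose_mat M)"
  then obtain y where "y \<in> mat_range (transpose_mat M)" "G = F (v + y)" by blast
  then show "G \<in> face_family n A (F v)"
    using faces_reachable[OF v] unfolding face_family_def by fastforce
qed

lemma card_face_family_F:
  assumes v: "v \<in> carrier_vec m"
  shows "finite (face_family n A (F v))"
    and "card (face_family n A (F v)) = 2 ^ vec_space.rank m M"
proof -
  let ?R = "mat_range (transpose_mat M)"
  have R: "?R \<subseteq> carrier_vec m" using M_carrier by (auto simp: mat_range_def)
  have "finite ?R" using M_carrier by (simp add: mat_range_def)
  then show "finite (face_family n A (F v))" unfolding face_family_F[OF v] by simp
  have "inj_on (\<lambda>y. v + y) ?R"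
    using v R by (intro inj_onI) (metis subsetD vec_add_cancel_bit)
  moreover have "(\<lambda>y. v + y) ` ?R \<subseteq> carrier_vec m" using v R by auto
  ultimately have "card (face_family n A (F v)) = card ?R"
    unfolding face_family_F[OF v] using F_inj
    by (simp add: card_image inj_on_subset)
  also have "\<dots> = card (mat_range M)" by (rule card_range_transpose[OF M_carrier])
  also have "\<dots> = 2 ^ vec_space.rank m M"
    using card_mat_range_rank[OF M_carrier] card_UNIV_bit by simp
  finally show "card (face_family n A (F v)) = 2 ^ vec_space.rank m M" .
qed

definition sign_vec :: "bit vec" where
  "sign_vec = vec m (\<lambda>a. if int (coord a) \<in> J then 0 else 1)"

lemma facet_value_sign_vec:
  assumes j: "j \<in> J" and a: "a < m" and ja: "nat \<bar>j\<bar> = coord a"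
  shows "(if 0 < j then 1/4 else -1/4) = sign_val (sign_vec $ a)"
proof -
  have "0 < j \<longleftrightarrow> int (coord a) \<in> J"
  proof
    assume "0 < j"
    with ja have "j = int (coord a)" by auto
    then show "int (coord a) \<in> J" using j by simp
  next
    assume pos: "int (coord a) \<in> J"
    have "\<bar>int (coord a)\<bar> = \<bar>j\<bar>" using ja J_abs[OF j] by simp
    then have "int (coord a) = j" by (rule inj_onD[OF inj_abs _ pos j])
    then show "0 < j" using coord_range[OF a] by simp
  qed
  then show ?thesis using a by (simp add: sign_vec_def sign_val_def)
qed

lemma face_eq_F: "face n J = F sign_vec"
proof (intro equalityI subsetI)
  fix x assume x: "x \<in> face n J"
  have "x (coord a) = sign_val (sign_vec $ a)" if a: "a < m" for a
  proof -
    obtain j where j: "j \<in> J" "nat \<bar>j\<bar> = coord a" using coord_J[OF a] by blast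
    then have "x (nat \<bar>j\<bar>) = (if 0 < j then 1/4 else -1/4)"
      using x by (auto simp: face_def facet_def)
    then show ?thesis using facet_value_sign_vec[OF j(1) a j(2)] j(2) by simp
  qed
  then show "x \<in> F sign_vec" using x by (simp add: face_def signed_face_def)
next
  fix x assume x: "x \<in> F sign_vec"
  have "x \<in> facet n j" if j: "j \<in> J" for j
  proof -
    obtain a where a: "a < m" "coord a = nat \<bar>j\<bar>" using J_coord[OF j] by blast
    then have "x (nat \<bar>j\<bar>) = (if 0 < j then 1/4 else -1/4)"
      using x facet_value_sign_vec[OF j a(1) a(2)[symmetric]] by (auto simp: signed_face_def)
    then show ?thesis using x by (simp add: signed_face_def facet_def)
  qed
  then show "x \<in> face n J" using x by (auto simp: face_def signed_face_def)
qed

end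

theorem mainTheorem11:
  fixes n :: nat and A :: "bit mat" and J :: "int set"
  assumes "A \<in> carrier_mat n n"
    and "\<forall>i<n. A $$ (i, i) = 0"
    and "J \<noteq> {}" and "J \<subseteq> signed_idx n" and "inj_on abs J"
  shows "finite (face_family n A (face n J)) \<and>
    card (face_family n A (face n J)) =
      2 ^ vec_space.rank (card J)
        (submatrix (A + 1\<^sub>m n) ((\<lambda>j. nat \<bar>j\<bar> - 1) ` J) ((\<lambda>j. nat \<bar>j\<bar> - 1) ` J))"
proof -
  interpret face_pairing n A J using assms by unfold_locales auto
  have "sign_vec \<in> carrier_vec m" by (simp add: sign_vec_def)
  then show ?thesis
    using card_face_family_F face_eq_F unfolding m_def M_def supp_def by simp
qed

end
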